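(* For every strong quasi-MV* algebra $\mathbf{Q}$ and every strong quasi-Wajsberg* algebra $\mathbf{S}$ we have $g(f(\mathbf{Q}))=\mathbf{Q}$ and $f(g(\mathbf{S}))=\mathbf{S}$. Hence $f$ and $g$ are mutually inverse correspondences between strong quasi-MV* algebras and strong quasi-Wajsberg* algebras.
   Context: A quasi-MV* algebra is an algebra $\langle A;\oplus,-,{}^{+},{}^{-},0,1\rangle$ of type $\langle 2,1,1,1,0,0\rangle$ (${}^+,{}^-$ bind more tightly than $-$, which binds more tightly than $\oplus$; $-1$ denotes $-(1)$) such that for all $x,y,z$: $x\oplus y=y\oplus x$; $(1\oplus x)\oplus(y\oplus(1\oplus z))=((1\oplus x)\oplus y)\oplus(1\oplus z)$; $(x\oplus 1)\oplus 1=1$; $(x\oplus y)\oplus 0=x\oplus y$; $x^{+}\oplus 0=(x\oplus 0)^{+}=1\oplus(-1\oplus x)$ and $x^{-}\oplus 0=(x\oplus 0)^{-}=-1\oplus(1\oplus x)$; $x\oplus y=(x^{+}\oplus y^{+})\oplus(x^{-}\oplus y^{-})$; $0=-0$; $x\oplus(-x)=0$; $-(x\oplus y)=(-x)\oplus(-y)$; $-(-x)=x$; $(-x\oplus(x\oplus y))^{+}=-x^{+}\oplus(x^{+}\oplus y^{+})$; $x\vee y=y\vee x$; $x\vee(y\vee z)=(x\vee y)\vee z$; $x\oplus(y\vee z)=(x\oplus y)\vee(x\oplus z)$; where $x\vee y:=(x^{+}\oplus(-x^{+}\oplus y^{+})^{+})\oplus(x^{-}\oplus(-x^{-}\oplus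 y^{-})^{+})$. A strong quasi-MV* algebra additionally satisfies $x^+=x^+\oplus 0$, $x^-=x^-\oplus 0$. A quasi-Wajsberg* algebra is an algebra $\langle W;\to,\neg,{}^+,{}^-,1\rangle$ of type $\langle 2,1,1,1,0\rangle$ (${}^+,{}^-$ bind more tightly than $\neg$, which binds more tightly than $\to$) such that for all $x,y,z$: $x\to y=\neg y\to\neg x$; $(x\to 1)\to((y\to 1)\to z)=(y\to 1)\to((x\to 1)\to z)$; $(1\to x)\to 1=1$; $(z\to z)\to(x\to y)=x\to y$; $(1\to 1)\to x^{+}=((1\to 1)\to x)^{+}=(x\to 1)\to 1$ and $(1\to 1)\to x^{-}=((1\to 1)\to x)^{-}=(x\to\neg 1)\to\neg 1$; $x\to y=(y^{+}\to x^{-})\to(x^{+}\to y^{-})$; $\neg(x\to y)=y\to x$; $\neg\neg x=x$; $(x\to(\neg x\to y))^{+}=x^{+}\to(\neg x^{+}\to y^{+})$; $x\vee y=y\vee x$; $x\vee(y\vee z)=(x\vee y)\vee z$; $x\to(y\vee z)=(x\to y)\vee(x\to z)$; where $x\vee y:=((x^{+}\to y^{+})^{+}\to(\neg x)^{-})\to((y^{-}\to x^{-})^{-}\to x^{-})$. A strong quasi-Wajsberg* algebra additionally satisfies $x^+=(1\to 1)\to x^+$, $x^-=(1\to 1)\to x^-$. For a strong quasi-MV* algebra $\mathbf{Q}$, $f(\mathbf{Q})=\langle Q;\to,\neg,{}^+,{}^-,1\rangle$ with $x\to y:=-x\oplus y$, $\neg x:=-x$ (same ${}^+,{}^-,1$);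 it is a strong quasi-Wajsberg* algebra. For a strong quasi-Wajsberg* algebra $\mathbf{S}$, $g(\mathbf{S})=\langle S;\oplus,-,{}^+,{}^-,0,1\rangle$ with $0:=x\to x$ (independent of $x$), $x\oplus y:=\neg x\to y$, $-x:=\neg x$ (same ${}^+,{}^-,1$); it is a strong quasi-MV* algebra. *)

theory Defs
  imports Main
begin

text \<open>Algebras are modelled with carrier the whole type 'a.\<close>

record 'a qmv =
  mv_oplus :: "'a \<Rightarrow> 'a \<Rightarrow> 'a"
  mv_neg   :: "'a \<Rightarrow> 'a"
  mv_plus  :: "'a \<Rightarrow> 'a"
  mv_minus :: "'a \<Rightarrow> 'a"
  mv_zero  :: 'a
  mv_one   :: 'a

record 'a qw =
  w_imp   :: "'a \<Rightarrow> 'a \<Rightarrow> 'a"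
  w_neg   :: "'a \<Rightarrow> 'a"
  w_plus  :: "'a \<Rightarrow> 'a"
  w_minus :: "'a \<Rightarrow> 'a"
  w_one   :: 'a

definition mv_join :: "'a qmv \<Rightarrow> 'a \<Rightarrow> 'a \<Rightarrow> 'a" where
  "mv_join Q x y =
     (let oplus = mv_oplus Q; neg = mv_neg Q; pl = mv_plus Q; mi = mv_minus Q in
      oplus (oplus (pl x) (pl (oplus (neg (pl x)) (pl y))))
            (oplus (mi x) (pl (oplus (neg (mi x)) (mi y)))))"

definition quasi_MV_star :: "'a qmv \<Rightarrow> bool" where
  "quasi_MV_star Q \<longleftrightarrow>
    (let oplus = mv_oplus Q; neg = mv_neg Q; pl = mv_plus Q; mi = mv_minus Q;
         zero = mv_zero Q; one = mv_one Q; join = mv_join Q in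
     (\<forall>x y z.
        oplus x y = oplus y x \<and>
        oplus (oplus one x) (oplus y (oplus one z)) = oplus (oplus (oplus one x) y) (oplus one z) \<and>
        oplus (oplus x one) one = one \<and>
        oplus (oplus x y) zero = oplus x y \<and>
        oplus (pl x) zero = pl (oplus x zero) \<and>
        pl (oplus x zero) = oplus one (oplus (neg one) x) \<and>
        oplus (mi x) zero = mi (oplus x zero) \<and>
        mi (oplus x zero) = oplus (neg one) (oplus one x) \<and>
        oplus x y = oplus (oplus (pl x) (pl y)) (oplus (mi x) (mi y)) \<and>
        zero = neg zero \<and>
        oplus x (neg x) = zero \<and>
        neg (oplus x y) = oplus (neg x) (neg y) \<and>
        neg (neg x) = x \<and>
        pl (oplus (neg x) (oplus x y)) = oplus (neg (pl x)) (oplus (pl x) (pl y)) \<and>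
        join x y = join y x \<and>
        join x (join y z) = join (join x y) z \<and>
        oplus x (join y z) = join (oplus x y) (oplus x z)))"

definition strong_quasi_MV_star :: "'a qmv \<Rightarrow> bool" where
  "strong_quasi_MV_star Q \<longleftrightarrow> quasi_MV_star Q \<and>
     (\<forall>x. mv_plus Q x = mv_oplus Q (mv_plus Q x) (mv_zero Q) \<and>
          mv_minus Q x = mv_oplus Q (mv_minus Q x) (mv_zero Q))"

definition w_join :: "'a qw \<Rightarrow> 'a \<Rightarrow> 'a \<Rightarrow> 'a" where
  "w_join S x y =
     (let imp = w_imp S; neg = w_neg S; pl = w_plus S; mi = w_minus S in
      imp (imp (pl (imp (pl x) (pl y))) (mi (neg x)))
          (imp (mi (imp (mi y) (mi x))) (mi x)))"

definition quasi_Wajsberg_star :: "'a qw \<Rightarrow> bool" where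
  "quasi_Wajsberg_star S \<longleftrightarrow>
    (let imp = w_imp S; neg = w_neg S; pl = w_plus S; mi = w_minus S;
         one = w_one S; join = w_join S in
     (\<forall>x y z.
        imp x y = imp (neg y) (neg x) \<and>
        imp (imp x one) (imp (imp y one) z) = imp (imp y one) (imp (imp x one) z) \<and>
        imp (imp one x) one = one \<and>
        imp (imp z z) (imp x y) = imp x y \<and>
        imp (imp one one) (pl x) = pl (imp (imp one one) x) \<and>
        pl (imp (imp one one) x) = imp (imp x one) one \<and>
        imp (imp one one) (mi x) = mi (imp (imp one one) x) \<and>
        mi (imp (imp one one) x) = imp (imp x (neg one)) (neg one) \<and>
        imp x y = imp (imp (pl y) (mi x)) (imp (pl x) (mi y)) \<and>
        neg (imp x y) = imp y x \<and>
        neg (neg x) = x \<and>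
        pl (imp x (imp (neg x) y)) = imp (pl x) (imp (neg (pl x)) (pl y)) \<and>
        join x y = join y x \<and>
        join x (join y z) = join (join x y) z \<and>
        imp x (join y z) = join (imp x y) (imp x z)))"

definition strong_quasi_Wajsberg_star :: "'a qw \<Rightarrow> bool" where
  "strong_quasi_Wajsberg_star S \<longleftrightarrow> quasi_Wajsberg_star S \<and>
     (\<forall>x. w_plus S x = w_imp S (w_imp S (w_one S) (w_one S)) (w_plus S x) \<and>
          w_minus S x = w_imp S (w_imp S (w_one S) (w_one S)) (w_minus S x))"

text \<open>The translations f and g. In g, 0 := x \<rightarrow> x, which is independent of x;
  we take x := 1.\<close>

definition f_trans :: "'a qmv \<Rightarrow> 'a qw" where
  "f_trans Q = \<lparr> w_imp = (\<lambda>x y. mv_oplus Q (mv_neg Q x) y), w_neg = mv_neg Q,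
                 w_plus = mv_plus Q, w_minus = mv_minus Q, w_one = mv_one Q \<rparr>"

definition g_trans :: "'a qw \<Rightarrow> 'a qmv" where
  "g_trans S = \<lparr> mv_oplus = (\<lambda>x y. w_imp S (w_neg S x) y), mv_neg = w_neg S,
                 mv_plus = w_plus S, mv_minus = w_minus S,
                 mv_zero = w_imp S (w_one S) (w_one S), mv_one = w_one S \<rparr>"

end

theory Submission
  imports Defs
begin

text \<open>Both round trips only re-express the operations through each other: in
  g(f(Q)) the sum is --x \<oplus> y and the zero is -1 \<oplus> 1, in f(g(S)) the implication is
  \<not>\<not>x \<rightarrow> y. So involutive negation and x \<oplus> -x = 0 suffice.\<close>

lemma quasi_MV_star_neg_neg:
  "quasi_MV_star Q \<Longrightarrow> mv_neg Q (mv_neg Q x) = x"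
  unfolding quasi_MV_star_def Let_def by blast

lemma quasi_MV_star_oplus_commute:
  "quasi_MV_star Q \<Longrightarrow> mv_oplus Q x y = mv_oplus Q y x"
  unfolding quasi_MV_star_def Let_def by blast

lemma quasi_MV_star_oplus_neg_self:
  "quasi_MV_star Q \<Longrightarrow> mv_oplus Q x (mv_neg Q x) = mv_zero Q"
  unfolding quasi_MV_star_def Let_def by blast

lemma quasi_Wajsberg_star_neg_neg:
  "quasi_Wajsberg_star S \<Longrightarrow> w_neg S (w_neg S x) = x"
  unfolding quasi_Wajsberg_star_def Let_def by blast

lemma g_trans_f_trans:
  assumes "quasi_MV_star Q"
  shows "g_trans (f_trans Q) = Q"
proof (rule qmv.equality)
  have "mv_oplus Q (mv_neg Q (mv_one Q)) (mv_one Q) = mv_zero Q"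
    using assms by (simp add: quasi_MV_star_oplus_commute quasi_MV_star_oplus_neg_self)
  then show "mv_zero (g_trans (f_trans Q)) = mv_zero Q"
    by (simp add: g_trans_def f_trans_def)
qed (simp_all add: g_trans_def f_trans_def fun_eq_iff quasi_MV_star_neg_neg assms)

lemma f_trans_g_trans:
  assumes "quasi_Wajsberg_star S"
  shows "f_trans (g_trans S) = S"
  by (rule qw.equality)
    (simp_all add: g_trans_def f_trans_def fun_eq_iff quasi_Wajsberg_star_neg_neg assms)

theorem theorem3p2:
  fixes Q :: "'a qmv" and S :: "'a qw"
  shows "(strong_quasi_MV_star Q \<longrightarrow> g_trans (f_trans Q) = Q) \<and>
         (strong_quasi_Wajsberg_star S \<longrightarrow> f_trans (g_trans S) = S)"
  by (simp add: strong_quasi_MV_star_def strong_quasi_Wajsberg_star_def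
      g_trans_f_trans f_trans_g_trans)

end
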